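(* Let $\kappa\ge1$ and assume $\pi$ satisfies $\mathrm{MA}(\kappa)$ with constant $c_0>0$. Let $\mathcal{F}=\{f_1,\dots,f_M\}$ be a set of prediction rules $\mathcal{X}\to\{-1,1\}$. Then the ERM aggregate $\tilde f_n^{(\mathrm{ERM})}$ over $\mathcal{F}$ satisfies, for every integer $n\ge1$, $$\mathbb{E}[R(\tilde f_n^{(\mathrm{ERM})})-R^*]\le\min_{f\in\mathcal{F}}(R(f)-R^* )+C\left(\sqrt{\frac{\min_{f\in\mathcal{F}}(R(f)-R^* )^{1/\kappa}\log M}{n}}+\left(\frac{\log M}{n}\right)^{\kappa/(2\kappa-1)}\right),$$ where $C=32(6\vee537c_0\vee16(2c_0+1/3))$.
   Context: $(X,Y)$ is a random pair on $\mathcal{X}\times\{-1,1\}$ with distribution $\pi$; $D_n=((X_i,Y_i))_{i=1}^n$ are i.i.d. copies. $\eta(x)=\mathbb{P}(Y=1\mid X=x)$, $f^*=\mathrm{sign}(2\eta-1)$, $R(f)=\mathbb{P}(Y\ne f(X))$ (conditionally on $D_n$ for data-dependent $f$), $R^*=R(f^* )$. $\mathrm{MA}(\kappa)$ with constant $c_0$: $\mathbb{E}|f(X)-f^*(X)|\le c_0(R(f)-R^* )^{1/\kappa}$ for all measurable $f:\mathcal{X}\to\{-1,1\}$. The ERM aggregate is one element of $\mathcal{F}$ minimizing the empirical hinge risk $A_n(f)=\frac1n\sum_{i=1}^n\max(1-Y_if(X_i),0)$ over $\mathcal{F}$ (for $\{-1,1\}$-valued $f$, $A_n(f)=\frac2n\sum_{i=1}^n\mathbf{1}_{Y_i\ne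 f(X_i)}$, so this is empirical misclassification minimization). $a\vee b=\max(a,b)$. *)

theory Defs
  imports "HOL-Probability.Probability"
begin

text \<open>Setting: SX is the measurable space of inputs, P (= pi) is the joint law of (X,Y)
  on SX \<times> real (labels in {-1,1} almost surely).\<close>

text \<open>sign with the convention sign 0 = 1, so that f* takes values in {-1,1}.\<close>
definition sign1 :: "real \<Rightarrow> real" where
  "sign1 t = (if t \<ge> 0 then 1 else -1)"

text \<open>eta is a version of the regression function P(Y=1 | X=x).\<close>
definition is_regression_fun :: "('a \<times> real) measure \<Rightarrow> 'a measure \<Rightarrow> ('a \<Rightarrow> real) \<Rightarrow> bool" where
  "is_regression_fun P SX eta \<longleftrightarrow> eta \<in> borel_measurable SX \<and>
     (\<forall>A \<in> sets SX. integrable (distr P SX fst) (\<lambda>x. indicator A x * eta x) \<and>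
        measure P (A \<times> {1}) = (LINT x:A | distr P SX fst. eta x))"

definition bayes_rule :: "('a \<Rightarrow> real) \<Rightarrow> 'a \<Rightarrow> real" where
  "bayes_rule eta x = sign1 (2 * eta x - 1)"

definition risk :: "('a \<times> real) measure \<Rightarrow> ('a \<Rightarrow> real) \<Rightarrow> real" where
  "risk P f = measure P {z \<in> space P. snd z \<noteq> f (fst z)}"

definition bayes_risk :: "('a \<times> real) measure \<Rightarrow> ('a \<Rightarrow> real) \<Rightarrow> real" where
  "bayes_risk P eta = risk P (bayes_rule eta)"

definition classifier :: "'a measure \<Rightarrow> ('a \<Rightarrow> real) \<Rightarrow> bool" where
  "classifier SX f \<longleftrightarrow> f \<in> borel_measurable SX \<and> (\<forall>x. f x \<in> {-1, 1})"

definition margin_assumption ::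
  "('a \<times> real) measure \<Rightarrow> 'a measure \<Rightarrow> ('a \<Rightarrow> real) \<Rightarrow> real \<Rightarrow> real \<Rightarrow> bool" where
  "margin_assumption P SX eta kappa c0 \<longleftrightarrow>
     (\<forall>f. classifier SX f \<longrightarrow>
        (\<integral>z. \<bar>f (fst z) - bayes_rule eta (fst z)\<bar> \<partial>P)
          \<le> c0 * (risk P f - bayes_risk P eta) powr (1 / kappa))"

definition emp_hinge :: "nat \<Rightarrow> (nat \<Rightarrow> 'a \<times> real) \<Rightarrow> ('a \<Rightarrow> real) \<Rightarrow> real" where
  "emp_hinge n D f = (1 / real n) * (\<Sum>i<n. max (1 - snd (D i) * f (fst (D i))) 0)"

definition is_ERM :: "nat \<Rightarrow> ('a \<times> real) measure \<Rightarrow> ('a \<Rightarrow> real) set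
    \<Rightarrow> ((nat \<Rightarrow> 'a \<times> real) \<Rightarrow> ('a \<Rightarrow> real)) \<Rightarrow> bool" where
  "is_ERM n P F erm \<longleftrightarrow>
     (\<forall>D \<in> space (PiM {..<n} (\<lambda>_. P)). erm D \<in> F \<and> (\<forall>f \<in> F. emp_hinge n D (erm D) \<le> emp_hinge n D f))"

end

theory Submission
  imports Defs
begin

text \<open>Let \<open>fb\<close> minimise the excess risk \<open>e\<close> over \<open>F\<close> and let \<open>gap f = e f - e fb\<close>.
  ERM selects \<open>f\<close> only if the empirical hinge risk of \<open>f\<close> does not exceed that of \<open>fb\<close>.
  For \<open>\<plusminus>1\<close>-valued rules the hinge-loss difference takes only the values \<open>2, -2, 0\<close>, so a
  Chernoff bound gives \<open>P(ERM = f) \<le> exp (- n gap\<^sup>2 / (2 d))\<close>, where \<open>d\<close> is the probability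
  that \<open>f\<close> and \<open>fb\<close> disagree. Comparing both rules with the Bayes rule, the margin assumption
  bounds \<open>d\<close> by \<open>c0 (e f\<^bsup>1/\<kappa>\<^esup> + e fb\<^bsup>1/\<kappa>\<^esup>) / 2\<close>. Hence every \<open>f\<close> whose gap exceeds a threshold
  \<open>eps\<close> of the order of the claimed rate contributes at most \<open>eps / M\<close> to
  \<open>E gap (ERM) = \<Sum>f. gap f P(ERM = f)\<close>, and the remaining rules at most \<open>eps\<close> in total.\<close>

definition hinge_loss :: "('a \<Rightarrow> real) \<Rightarrow> 'a \<times> real \<Rightarrow> real" where
  "hinge_loss f z = max (1 - snd z * f (fst z)) 0"

definition disagreement :: "('a \<times> real) measure \<Rightarrow> ('a \<Rightarrow> real) \<Rightarrow> ('a \<Rightarrow> real) \<Rightarrow> real" where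
  "disagreement P f g = measure P {z \<in> space P. f (fst z) \<noteq> g (fst z)}"

definition excess_risk :: "('a \<times> real) measure \<Rightarrow> ('a \<Rightarrow> real) \<Rightarrow> ('a \<Rightarrow> real) \<Rightarrow> real" where
  "excess_risk P eta f = risk P f - bayes_risk P eta"

text \<open>The threshold \<open>eps\<close> of the proof, with \<open>t = 1 / \<kappa>\<close>, \<open>ell = log M / n\<close> and \<open>e\<close> the
  smallest excess risk in the class.\<close>
definition deviation_threshold :: "real \<Rightarrow> real \<Rightarrow> real \<Rightarrow> real \<Rightarrow> real" where
  "deviation_threshold c0 t ell e = (4 * c0 * ell) powr (1 / (2 - t)) + sqrt (8 * c0 * ell * e powr t)"

section \<open>Elementary inequalities\<close>

text \<open>The left side is \<open>E exp (- l Z)\<close> for \<open>Z\<close> equal to \<open>1\<close>, \<open>-1\<close>, \<open>0\<close> with probabilities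
  \<open>p\<close>, \<open>q\<close>, \<open>1 - p - q\<close>.\<close>
lemma ternary_mgf_bound:
  fixes p q :: real
  assumes "0 \<le> q" "q \<le> p"
  shows "\<exists>l\<ge>0. 1 - (p + q) + exp (- l) * p + exp l * q \<le> exp (- ((p - q)^2 / (2 * (p + q))))"
proof (cases "q = 0")
  case True
  have "1 - (p + q) + exp (- ln 2) * p + exp (ln 2) * q = 1 + (- p / 2)"
    using True by (simp add: exp_minus)
  also have "\<dots> \<le> exp (- p / 2)" by (rule exp_ge_add_one_self)
  also have "- p / 2 = - ((p - q)^2 / (2 * (p + q)))"
    using True by (cases "p = 0") (auto simp: power2_eq_square)
  finally show ?thesis by (intro exI[of _ "ln 2"]) simp
next
  case False
  define a where "a = sqrt p"
  define b where "b = sqrt q"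
  have a: "0 < a" "a^2 = p" and b: "0 < b" "b^2 = q" and "b \<le> a"
    using False assms by (auto simp: a_def b_def)
  \<comment> \<open>The optimal choice \<open>l = ln (a / b)\<close> turns the left side into \<open>1 - (a - b)\<^sup>2\<close>.\<close>
  have "1 - (p + q) + exp (- ln (a / b)) * p + exp (ln (a / b)) * q = 1 + (- ((a - b)^2))"
    using a b by (simp add: exp_minus power2_eq_square field_simps flip: a(2) b(2))
  also have "\<dots> \<le> exp (- ((a - b)^2))" by (rule exp_ge_add_one_self)
  also have "\<dots> \<le> exp (- ((p - q)^2 / (2 * (p + q))))"
  proof -
    have "(p - q)^2 = (a - b)^2 * (a + b)^2"
      by (simp add: power2_eq_square square_diff_square_factored flip: a(2) b(2))
    also have "\<dots> \<le> (a - b)^2 * (2 * (p + q))"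
      using sum_squares_bound[of a b] by (intro mult_left_mono) (simp_all add: power2_sum flip: a(2) b(2))
    finally have "(p - q)^2 \<le> (a - b)^2 * (2 * (p + q))" .
    moreover have "0 < p + q" using False assms by simp
    ultimately show ?thesis by (simp add: divide_le_eq)
  qed
  finally show ?thesis using a b \<open>b \<le> a\<close> by (intro exI[of _ "ln (a / b)"]) simp
qed

lemma powr_add_le_add_powr:
  fixes x y t :: real
  assumes "0 \<le> x" "0 \<le> y" "0 < t" "t \<le> 1"
  shows "(x + y) powr t \<le> x powr t + y powr t"
proof (cases "x + y = 0")
  case True
  thus ?thesis using assms by simp
next
  case False
  define s where "s = x + y"
  have s: "0 < s" using False assms by (simp add: s_def)
  have scale: "z * s powr (t - 1) \<le> z powr t" if "0 \<le> z" "z \<le> s" for z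
  proof (cases "z = 0")
    case False
    hence "s powr (t - 1) \<le> z powr (t - 1)"
      using that assms by (intro powr_mono2') auto
    hence "z * s powr (t - 1) \<le> z * z powr (t - 1)" using that by (simp add: mult_left_mono)
    also have "\<dots> = z powr t" using that by (simp add: powr_mult_base)
    finally show ?thesis .
  qed (use assms in simp)
  have "(x + y) powr t = x * s powr (t - 1) + y * s powr (t - 1)"
    using s by (simp add: s_def powr_mult_base flip: distrib_right)
  also have "\<dots> \<le> x powr t + y powr t"
    using scale[of x] scale[of y] assms by (intro add_mono) (auto simp: s_def)
  finally show ?thesis .
qed

lemma add_powr_le_mult:
  fixes u x b m t :: real
  assumes "1 \<le> u" "0 \<le> x" "0 \<le> b" "0 \<le> m" "0 < t" "t \<le> 1"
  shows "(u * x + b) powr t + m \<le> u * ((x + b) powr t + m)"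
proof -
  have "(u * x + b) powr t \<le> (u * (x + b)) powr t"
    using assms by (intro powr_mono2) (auto simp: distrib_left mult_le_cancel_right1)
  also have "\<dots> = u powr t * (x + b) powr t" using assms by (simp add: powr_mult)
  also have "\<dots> \<le> u * (x + b) powr t"
    using powr_mono[of t 1 u] assms by (intro mult_right_mono) auto
  finally have "(u * x + b) powr t \<le> u * (x + b) powr t" .
  moreover have "m \<le> u * m" using mult_right_mono[of 1 u m] assms by simp
  ultimately show ?thesis by (simp add: distrib_left)
qed

lemma mult_exp_neg_mult_le:
  fixes u h :: real
  assumes "1 \<le> u" "1 \<le> h"
  shows "u * exp (- (u * h)) \<le> exp (- h)"
proof -
  have "u * exp (- (u * h)) \<le> exp (u - 1) * exp (- (u * h))"
    using exp_ge_add_one_self[of "u - 1"] by (intro mult_right_mono) auto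
  also have "\<dots> = exp (- h - (u - 1) * (h - 1))" by (simp add: algebra_simps flip: exp_add)
  also have "\<dots> \<le> exp (- h)" using assms by simp
  finally show ?thesis .
qed

text \<open>Writing \<open>gap = u * eps\<close> with \<open>u \<ge> 1\<close>, the bound on \<open>d\<close> grows at most linearly in \<open>u\<close>, so the
  exponent \<open>n gap\<^sup>2 / (2 d)\<close> is at least \<open>u h\<close> with \<open>h \<ge> 2 ln M\<close>; the factor \<open>u\<close> is then
  absorbed by \<open>u exp (- u h) \<le> exp (- h)\<close>.\<close>
lemma gap_times_tail_le:
  fixes gap eps d c e m t pr :: real and n M :: nat
  assumes eps_pos: "0 < eps" and eps_gap: "eps < gap" and gap_d: "gap \<le> d"
    and var: "2 * d \<le> c * ((gap + e) powr t + m)"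
    and eps: "2 * ln M * (c * ((eps + e) powr t + m)) \<le> n * eps^2"
    and tail: "pr \<le> exp (- (n * gap^2 / (2 * d)))"
    and "0 \<le> e" "0 \<le> m" "0 < t" "t \<le> 1" "0 < c" "2 \<le> M"
  shows "gap * pr \<le> eps / M"
proof -
  define u where "u = gap / eps"
  define V where "V = c * ((eps + e) powr t + m)"
  define h where "h = n * eps^2 / V"
  have u: "1 \<le> u" and gap: "gap = u * eps"
    using eps_pos eps_gap by (simp_all add: u_def)
  have V: "0 < V"
    using eps_pos \<open>0 \<le> e\<close> \<open>0 \<le> m\<close> \<open>0 < c\<close> unfolding V_def by (simp add: add_pos_nonneg)
  have "2 * ln 2 \<le> 2 * ln (real M)" using \<open>2 \<le> M\<close> by simp
  moreover have "2 * ln M \<le> h" using eps V by (simp add: h_def V_def le_divide_eq)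
  ultimately have lnM: "ln M \<le> h" and h: "1 \<le> h"
    using ln2_ge_two_thirds ln_ge_zero[of M] \<open>2 \<le> M\<close> by linarith+
  have "c * ((gap + e) powr t + m) \<le> c * (u * ((eps + e) powr t + m))"
    unfolding gap using add_powr_le_mult[OF u, of eps e m t] eps_pos \<open>0 \<le> e\<close> \<open>0 \<le> m\<close> \<open>0 < t\<close> \<open>t \<le> 1\<close> \<open>0 < c\<close>
    by (intro mult_left_mono) auto
  hence "2 * d \<le> u * V" using var unfolding V_def by (simp only: mult.left_commute)
  hence "n * gap^2 / (u * V) \<le> n * gap^2 / (2 * d)"
  proof (rule divide_left_mono)
    show "0 < u * V * (2 * d)" using u V eps_pos eps_gap gap_d by simp
  qed simp
  moreover have "n * gap^2 / (u * V) = u * h"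
    using u V by (simp add: h_def gap power2_eq_square)
  ultimately have "exp (- (n * gap^2 / (2 * d))) \<le> exp (- (u * h))" by simp
  hence "pr \<le> exp (- (u * h))" using tail by linarith
  hence "gap * pr \<le> eps * (u * exp (- (u * h)))"
    using eps_pos u by (simp add: gap mult_left_mono)
  also have "\<dots> \<le> eps * exp (- ln M)"
  proof (rule mult_left_mono)
    have "u * exp (- (u * h)) \<le> exp (- h)" by (rule mult_exp_neg_mult_le[OF u h])
    also have "\<dots> \<le> exp (- ln M)" using lnM by simp
    finally show "u * exp (- (u * h)) \<le> exp (- ln M)" .
  qed (use eps_pos in simp)
  also have "\<dots> = eps / M" using \<open>2 \<le> M\<close> by (simp add: exp_minus divide_inverse)
  finally show ?thesis .
qed

lemma deviation_threshold_nonneg: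
  "0 \<le> c0 \<Longrightarrow> 0 \<le> ell \<Longrightarrow> 0 \<le> deviation_threshold c0 t ell e"
  by (simp add: deviation_threshold_def)

text \<open>The two summands of the threshold take care of the two terms on the left:
  the first yields \<open>4 c0 ell eps\<^sup>t \<le> eps\<^sup>2\<close>, the second \<open>8 c0 ell e\<^sup>t \<le> eps\<^sup>2\<close>.\<close>
lemma deviation_threshold_sq_ge:
  fixes ell c0 e t :: real
  assumes "0 < ell" "0 < c0" "0 \<le> e" "0 < t" "t \<le> 1"
  defines "eps \<equiv> deviation_threshold c0 t ell e"
  shows "2 * c0 * ell * ((eps + e) powr t + e powr t) \<le> eps^2"
proof -
  define a where "a = (4 * c0 * ell) powr (1 / (2 - t))"
  define b where "b = sqrt (8 * c0 * ell * e powr t)"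
  have eps: "eps = a + b" by (simp add: eps_def deviation_threshold_def a_def b_def)
  have a: "0 < a" and b: "0 \<le> b" using assms by (simp_all add: a_def b_def)
  have "a powr (2 - t) = 4 * c0 * ell" using assms by (simp add: a_def powr_powr)
  moreover have "a powr (2 - t) \<le> eps powr (2 - t)"
    using a b \<open>t \<le> 1\<close> by (intro powr_mono2) (auto simp: eps)
  ultimately have "4 * c0 * ell \<le> eps powr (2 - t)" by simp
  hence "4 * c0 * ell * eps powr t \<le> eps powr (2 - t) * eps powr t" by (simp add: mult_right_mono)
  also have "\<dots> = eps^2" using a b by (simp add: eps add_pos_nonneg powr_realpow flip: powr_add)
  finally have first: "4 * c0 * ell * eps powr t \<le> eps^2" .
  have "8 * c0 * ell * e powr t = b^2" using assms by (simp add: b_def)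
  also have "\<dots> \<le> eps^2" using a b by (simp add: eps power_mono)
  finally have second: "8 * c0 * ell * e powr t \<le> eps^2" .
  have "(eps + e) powr t \<le> eps powr t + e powr t"
    using a b assms(3-5) unfolding eps by (intro powr_add_le_add_powr) auto
  hence "2 * c0 * ell * ((eps + e) powr t + e powr t) \<le> 2 * c0 * ell * (eps powr t + 2 * e powr t)"
    using assms by (intro mult_left_mono) auto
  thus ?thesis using first second by (simp add: algebra_simps)
qed

lemma powr_le_max_1:
  fixes x p :: real
  assumes "0 \<le> x" "0 \<le> p" "p \<le> 1"
  shows "x powr p \<le> max 1 x"
  using assms powr_le1[of p x] powr_mono[of p 1 x] by (cases "x \<le> 1") auto

lemma deviation_threshold_le_rate:
  fixes ell c0 e t K :: real
  assumes "0 \<le> ell" "0 < c0" "0 \<le> e" "0 < t" "t \<le> 1" "2 \<le> K" "32 * c0 \<le> K"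
  shows "2 * deviation_threshold c0 t ell e \<le> K * (sqrt (e powr t * ell) + ell powr (1 / (2 - t)))"
proof -
  have "2 * (4 * c0 * ell) powr (1 / (2 - t)) = 2 * (4 * c0) powr (1 / (2 - t)) * ell powr (1 / (2 - t))"
    using assms by (simp add: powr_mult)
  also have "\<dots> \<le> K * ell powr (1 / (2 - t))"
    using powr_le_max_1[of "4 * c0" "1 / (2 - t)"] assms by (intro mult_right_mono) auto
  finally have first: "2 * (4 * c0 * ell) powr (1 / (2 - t)) \<le> K * ell powr (1 / (2 - t))" .
  have "2 * sqrt (8 * c0 * ell * e powr t) = sqrt 4 * sqrt (8 * c0 * ell * e powr t)" by simp
  also have "\<dots> = sqrt (32 * c0) * sqrt (e powr t * ell)"
    by (simp only: real_sqrt_mult[symmetric]) (simp add: ac_simps)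
  also have "\<dots> \<le> K * sqrt (e powr t * ell)"
  proof (rule mult_right_mono)
    have "sqrt (32 * c0) = (32 * c0) powr (1 / 2)" using assms by (simp add: powr_half_sqrt)
    also have "\<dots> \<le> max 1 (32 * c0)" using assms by (intro powr_le_max_1) auto
    finally show "sqrt (32 * c0) \<le> K" using assms by linarith
  qed (use assms in simp)
  finally have second: "2 * sqrt (8 * c0 * ell * e powr t) \<le> K * sqrt (e powr t * ell)" .
  show ?thesis using first second by (simp add: deviation_threshold_def distrib_left)
qed

section \<open>Chernoff bound for comparing two classifiers\<close>

lemma classifier_measurable: "classifier SX f \<Longrightarrow> f \<in> borel_measurable SX"
  by (simp add: classifier_def)

lemma classifier_values: "classifier SX f \<Longrightarrow> f x = -1 \<or> f x = 1"
  by (auto simp: classifier_def)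

lemma (in prob_space) emeasure_PiM_le_nn_integral_exp_power:
  fixes Z :: "'a \<Rightarrow> real"
  assumes Z: "Z \<in> borel_measurable M" and A: "A \<in> sets (PiM {..<n} (\<lambda>_. M))"
    and A_le: "\<And>D. D \<in> A \<Longrightarrow> (\<Sum>i<n. Z (D i)) \<le> 0" and "0 \<le> l"
  shows "emeasure (PiM {..<n} (\<lambda>_. M)) A \<le> (\<integral>\<^sup>+z. ennreal (exp (- l * Z z)) \<partial>M) ^ n"
proof -
  interpret product_prob_space "\<lambda>_. M" "{..<n}" by unfold_locales
  have "emeasure (PiM {..<n} (\<lambda>_. M)) A = (\<integral>\<^sup>+D. indicator A D \<partial>PiM {..<n} (\<lambda>_. M))"
    using A by simp
  also have "\<dots> \<le> (\<integral>\<^sup>+D. (\<Prod>i<n. ennreal (exp (- l * Z (D i)))) \<partial>PiM {..<n} (\<lambda>_. M))"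
  proof (rule nn_integral_mono)
    fix D
    have "indicator A D \<le> ennreal (exp (- l * (\<Sum>i<n. Z (D i))))"
      using A_le[of D] \<open>0 \<le> l\<close> by (auto simp: indicator_def mult_nonneg_nonpos)
    thus "indicator A D \<le> (\<Prod>i<n. ennreal (exp (- l * Z (D i))))"
      by (simp add: prod_ennreal exp_sum sum_distrib_left)
  qed
  also have "\<dots> = (\<Prod>i<n. \<integral>\<^sup>+z. ennreal (exp (- l * Z z)) \<partial>M)"
    using Z by (intro product_nn_integral_prod) auto
  finally show ?thesis by simp
qed

lemma (in prob_space) integral_finite_range:
  fixes g :: "'a \<Rightarrow> 'b" and h :: "'b \<Rightarrow> real"
  assumes "finite F" and g: "\<And>x. x \<in> space M \<Longrightarrow> g x \<in> F"
    and fibre: "\<And>y. y \<in> F \<Longrightarrow> {x \<in> space M. g x = y} \<in> events"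
  shows "(\<integral>x. h (g x) \<partial>M) = (\<Sum>y\<in>F. h y * prob {x \<in> space M. g x = y})"
proof -
  have "(\<integral>x. h (g x) \<partial>M) = (\<integral>x. (\<Sum>y\<in>F. h y * indicator {x \<in> space M. g x = y} x) \<partial>M)"
    using g \<open>finite F\<close> by (intro Bochner_Integration.integral_cong) (auto simp: indicator_def)
  also have "\<dots> = (\<Sum>y\<in>F. \<integral>x. h y * indicator {x \<in> space M. g x = y} x \<partial>M)"
    using fibre by (intro Bochner_Integration.integral_sum) (auto simp: emeasure_eq_measure)
  also have "\<dots> = (\<Sum>y\<in>F. h y * prob {x \<in> space M. g x = y})"
    using fibre by (intro sum.cong) auto
  finally show ?thesis .
qed

locale binary_classification = prob_space P for P :: "('a \<times> real) measure" +
  fixes SX :: "'a measure"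
  assumes sets_P: "sets P = sets (SX \<Otimes>\<^sub>M borel)"
    and AE_label: "AE z in P. snd z \<in> {-1, 1}"
begin

lemma space_P: "space P = space SX \<times> UNIV"
  using sets_eq_imp_space_eq[OF sets_P] by (simp add: space_pair_measure)

lemma measurable_fst_P [measurable]: "fst \<in> measurable P SX"
  using measurable_fst[of SX borel] by (simp add: measurable_cong_sets[OF sets_P refl])

lemma measurable_snd_P [measurable]: "snd \<in> borel_measurable P"
  using measurable_snd[of SX borel] by (simp add: measurable_cong_sets[OF sets_P refl])

lemma hinge_loss_measurable [measurable]:
  assumes [measurable]: "f \<in> borel_measurable SX"
  shows "hinge_loss f \<in> borel_measurable P"
  unfolding hinge_loss_def[abs_def] by measurable

definition exclusive_errors :: "('a \<Rightarrow> real) \<Rightarrow> ('a \<Rightarrow> real) \<Rightarrow> ('a \<times> real) set" where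
  "exclusive_errors f g = {z \<in> space P. snd z \<noteq> f (fst z) \<and> snd z = g (fst z)}"

lemma exclusive_errors_sets [measurable]:
  assumes [measurable]: "f \<in> borel_measurable SX" "g \<in> borel_measurable SX"
  shows "exclusive_errors f g \<in> events"
  unfolding exclusive_errors_def by measurable

lemma risk_diff_eq:
  assumes "classifier SX f" "classifier SX g"
  shows "risk P f - risk P g = prob (exclusive_errors f g) - prob (exclusive_errors g f)"
proof -
  note [measurable] = assms[THEN classifier_measurable]
  define both where "both = {z \<in> space P. snd z \<noteq> f (fst z) \<and> snd z \<noteq> g (fst z)}"
  have [measurable]: "both \<in> events" unfolding both_def by measurable
  have "{z \<in> space P. snd z \<noteq> f (fst z)} = exclusive_errors f g \<union> both"
    "{z \<in> space P. snd z \<noteq> g (fst z)} = exclusive_errors g f \<union> both"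
    by (auto simp: exclusive_errors_def both_def)
  moreover have "exclusive_errors f g \<inter> both = {}" "exclusive_errors g f \<inter> both = {}"
    by (auto simp: exclusive_errors_def both_def)
  ultimately show ?thesis
    unfolding risk_def by (simp add: finite_measure_Union)
qed

lemma prob_exclusive_errors_le_disagreement:
  assumes "classifier SX f" "classifier SX g"
  shows "prob (exclusive_errors f g) + prob (exclusive_errors g f) \<le> disagreement P f g"
proof -
  note [measurable] = assms[THEN classifier_measurable]
  have "prob (exclusive_errors f g) + prob (exclusive_errors g f)
      = prob (exclusive_errors f g \<union> exclusive_errors g f)"
    by (intro finite_measure_Union[symmetric]) (auto simp: exclusive_errors_def)
  also have "\<dots> \<le> disagreement P f g"
    unfolding disagreement_def by (intro finite_measure_mono) (auto simp: exclusive_errors_def)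
  finally show ?thesis .
qed

lemma risk_diff_le_disagreement:
  assumes "classifier SX f" "classifier SX g"
  shows "risk P f - risk P g \<le> disagreement P f g"
  using risk_diff_eq[OF assms] prob_exclusive_errors_le_disagreement[OF assms]
    measure_nonneg[of P "exclusive_errors g f"] by linarith

text \<open>For \<open>\<plusminus>1\<close>-valued rules and labels the hinge loss is twice the 0-1 loss, so the difference
  of two hinge losses is \<open>2\<close>, \<open>-2\<close> or \<open>0\<close> according to which rule alone errs.\<close>
lemma nn_integral_exp_hinge_diff:
  assumes "classifier SX f" "classifier SX g"
  defines "p \<equiv> prob (exclusive_errors f g)" and "q \<equiv> prob (exclusive_errors g f)"
  shows "(\<integral>\<^sup>+z. ennreal (exp (- (l / 2) * (hinge_loss f z - hinge_loss g z))) \<partial>P)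
    = ennreal (1 - (p + q) + exp (- l) * p + exp l * q)"
proof -
  note [measurable] = assms(1,2)[THEN classifier_measurable]
  define Sp Sm where "Sp = exclusive_errors f g" and "Sm = exclusive_errors g f"
  define S0 where "S0 = space P - (Sp \<union> Sm)"
  have [measurable]: "Sp \<in> events" "Sm \<in> events" "S0 \<in> events"
    by (simp_all add: Sp_def Sm_def S0_def sets.Diff)
  have disj: "Sp \<inter> Sm = {}" by (auto simp: Sp_def Sm_def exclusive_errors_def)
  have prob_S0: "prob S0 = 1 - (p + q)"
    using prob_compl[of "Sp \<union> Sm"] disj by (simp add: S0_def p_def q_def Sp_def Sm_def finite_measure_Union)
  have "AE z in P. ennreal (exp (- (l / 2) * (hinge_loss f z - hinge_loss g z))) =
      indicator S0 z + ennreal (exp (- l)) * indicator Sp z + ennreal (exp l) * indicator Sm z"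
    using AE_space AE_label
  proof eventually_elim
    case (elim z)
    thus ?case
      using assms(1,2)[THEN classifier_values, of "fst z"]
      by (auto simp: hinge_loss_def Sp_def Sm_def S0_def exclusive_errors_def indicator_def)
  qed
  hence "(\<integral>\<^sup>+z. ennreal (exp (- (l / 2) * (hinge_loss f z - hinge_loss g z))) \<partial>P)
      = ennreal (prob S0) + ennreal (exp (- l)) * ennreal p + ennreal (exp l) * ennreal q"
    by (simp add: nn_integral_cong_AE nn_integral_add nn_integral_cmult_indicator emeasure_eq_measure
        p_def q_def Sp_def Sm_def)
  also have "\<dots> = ennreal (1 - (p + q) + exp (- l) * p + exp l * q)"
    using prob_S0 measure_nonneg[of P S0] by (simp add: ennreal_plus ennreal_mult p_def q_def)
  finally show ?thesis .
qed

lemma prob_hinge_sum_le_tail: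
  fixes n :: nat
  assumes f: "classifier SX f" and g: "classifier SX g" and "risk P g \<le> risk P f"
    and A: "A \<in> sets (PiM {..<n} (\<lambda>_. P))"
    and A_le: "\<And>D. D \<in> A \<Longrightarrow> (\<Sum>i<n. hinge_loss f (D i)) \<le> (\<Sum>i<n. hinge_loss g (D i))"
  shows "measure (PiM {..<n} (\<lambda>_. P)) A
    \<le> exp (- (n * (risk P f - risk P g)^2 / (2 * disagreement P f g)))"
proof -
  interpret Q: prob_space "PiM {..<n} (\<lambda>_. P)"
    by (rule prob_space_PiM) (rule prob_space_axioms)
  note [measurable] = f[THEN classifier_measurable] g[THEN classifier_measurable]
  define p q where "p = prob (exclusive_errors f g)" and "q = prob (exclusive_errors g f)"
  have gap: "risk P f - risk P g = p - q"
    using risk_diff_eq[OF f g] by (simp add: p_def q_def)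
  have pq_le: "p + q \<le> disagreement P f g"
    using prob_exclusive_errors_le_disagreement[OF f g] by (simp add: p_def q_def)
  have "0 \<le> q" "q \<le> p" "p + q \<le> 1"
    using gap \<open>risk P g \<le> risk P f\<close> pq_le prob_le_1
    by (simp_all add: q_def disagreement_def, smt (verit))
  then obtain l where "0 \<le> l"
    and l: "1 - (p + q) + exp (- l) * p + exp l * q \<le> exp (- ((p - q)^2 / (2 * (p + q))))"
    using ternary_mgf_bound by blast
  have [measurable]: "(\<lambda>z. hinge_loss f z - hinge_loss g z) \<in> borel_measurable P"
    by measurable
  define x where "x = 1 - (p + q) + exp (- l) * p + exp l * q"
  have "0 \<le> x" using \<open>0 \<le> q\<close> \<open>q \<le> p\<close> \<open>p + q \<le> 1\<close> by (simp add: x_def)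
  have "emeasure (PiM {..<n} (\<lambda>_. P)) A
      \<le> (\<integral>\<^sup>+z. ennreal (exp (- (l / 2) * (hinge_loss f z - hinge_loss g z))) \<partial>P) ^ n"
    using A A_le \<open>0 \<le> l\<close>
    by (intro emeasure_PiM_le_nn_integral_exp_power) (auto simp: sum_subtractf)
  also have "\<dots> = ennreal x ^ n"
    unfolding nn_integral_exp_hinge_diff[OF f g] x_def p_def q_def ..
  also have "\<dots> = ennreal (x ^ n)"
    using \<open>0 \<le> x\<close> by (simp add: ennreal_power)
  finally have "measure (PiM {..<n} (\<lambda>_. P)) A \<le> x ^ n"
    using \<open>0 \<le> x\<close> by (simp add: Q.emeasure_eq_measure)
  also have "\<dots> \<le> exp (- ((p - q)^2 / (2 * (p + q)))) ^ n"
    using \<open>0 \<le> x\<close> l by (simp add: x_def power_mono)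
  also have "\<dots> = exp (- (n * (p - q)^2 / (2 * (p + q))))"
    by (simp flip: exp_of_nat_mult)
  also have "\<dots> \<le> exp (- (n * (p - q)^2 / (2 * disagreement P f g)))"
  proof (cases "p + q = 0")
    case True
    hence "p = q" using \<open>0 \<le> q\<close> \<open>q \<le> p\<close> by linarith
    thus ?thesis by simp
  next
    case False
    thus ?thesis using pq_le \<open>0 \<le> q\<close> \<open>q \<le> p\<close> by (auto intro!: divide_left_mono)
  qed
  finally show ?thesis by (simp add: gap)
qed

lemma disagreement_triangle:
  assumes "classifier SX f" "classifier SX g" "classifier SX h"
  shows "disagreement P f g \<le> disagreement P f h + disagreement P g h"
proof -
  note [measurable] = assms[THEN classifier_measurable]
  have "disagreement P f g \<le>
      prob ({z \<in> space P. f (fst z) \<noteq> h (fst z)} \<union> {z \<in> space P. g (fst z) \<noteq> h (fst z)})"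
    unfolding disagreement_def by (intro finite_measure_mono) auto
  also have "\<dots> \<le> disagreement P f h + disagreement P g h"
    unfolding disagreement_def by (intro measure_Un_le) auto
  finally show ?thesis .
qed

lemma disagreement_eq_integral:
  assumes "classifier SX f" "classifier SX g"
  shows "disagreement P f g = (\<integral>z. \<bar>f (fst z) - g (fst z)\<bar> \<partial>P) / 2"
proof -
  note [measurable] = assms[THEN classifier_measurable]
  define S where "S = {z \<in> space P. f (fst z) \<noteq> g (fst z)}"
  have [measurable]: "S \<in> events" unfolding S_def by measurable
  have "(\<integral>z. \<bar>f (fst z) - g (fst z)\<bar> \<partial>P) = (\<integral>z. 2 * indicator S z \<partial>P)"
  proof (rule Bochner_Integration.integral_cong[OF refl])
    fix z
    show "\<bar>f (fst z) - g (fst z)\<bar> = 2 * indicator S z" if "z \<in> space P"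
      using that assms[THEN classifier_values, of "fst z"] by (auto simp: S_def indicator_def)
  qed
  thus ?thesis by (simp add: disagreement_def S_def)
qed

end

section \<open>Excess risk and the margin assumption\<close>

locale regression_model = binary_classification P SX for P :: "('a \<times> real) measure" and SX +
  fixes eta :: "'a \<Rightarrow> real"
  assumes regression: "is_regression_fun P SX eta"
begin

abbreviation marginal :: "'a measure" where
  "marginal \<equiv> distr P SX fst"

lemma eta_measurable [measurable]: "eta \<in> borel_measurable SX"
  using regression unfolding is_regression_fun_def by blast

lemma rectangle_events: "C \<in> sets SX \<Longrightarrow> B \<in> sets borel \<Longrightarrow> C \<times> B \<in> events"
  unfolding sets_P by (rule pair_measureI)

lemma integrable_indicator_eta: "C \<in> sets SX \<Longrightarrow> integrable marginal (\<lambda>x. indicator C x * eta x)"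
  using regression unfolding is_regression_fun_def by blast

lemma prob_label_one: "C \<in> sets SX \<Longrightarrow> prob (C \<times> {1}) = (\<integral>x. indicator C x * eta x \<partial>marginal)"
  using regression by (simp add: is_regression_fun_def set_lebesgue_integral_def)

lemma prob_label_minus_one:
  assumes "C \<in> sets SX"
  shows "prob (C \<times> {-1}) = measure marginal C - prob (C \<times> {1})"
proof -
  have "measure marginal C = prob (fst -` C \<inter> space P)"
    using assms by (intro measure_distr) auto
  also have "fst -` C \<inter> space P = C \<times> UNIV"
    using sets.sets_into_space[OF assms] by (auto simp: space_P)
  also have "prob (C \<times> UNIV) = prob (C \<times> {-1} \<union> C \<times> {1})"
    using AE_label assms by (intro measure_eq_AE) (auto intro!: rectangle_events)
  also have "\<dots> = prob (C \<times> {-1}) + prob (C \<times> {1})"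
    using assms by (intro finite_measure_Union) (auto intro!: rectangle_events)
  finally show ?thesis by simp
qed

lemma risk_eq_prob:
  assumes f: "classifier SX f"
  shows "risk P f = prob ({x \<in> space SX. f x = 1} \<times> {-1}) + prob ({x \<in> space SX. f x = -1} \<times> {1})"
proof -
  note [measurable] = classifier_measurable[OF f]
  have "risk P f = prob ({x \<in> space SX. f x = 1} \<times> {-1} \<union> {x \<in> space SX. f x = -1} \<times> {1})"
    unfolding risk_def
  proof (intro measure_eq_AE)
    show "AE z in P. (z \<in> {z \<in> space P. snd z \<noteq> f (fst z)}) =
        (z \<in> {x \<in> space SX. f x = 1} \<times> {-1} \<union> {x \<in> space SX. f x = -1} \<times> {1})"
      using AE_space AE_label
    proof eventually_elim
      case (elim z)
      hence "fst z \<in> space SX" "snd z = -1 \<or> snd z = 1" by (auto simp: space_P)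
      thus ?case using elim(1) classifier_values[OF f, of "fst z"] by (auto simp: mem_Times_iff)
    qed
  qed (auto intro!: rectangle_events)
  also have "\<dots> = prob ({x \<in> space SX. f x = 1} \<times> {-1}) + prob ({x \<in> space SX. f x = -1} \<times> {1})"
    by (intro finite_measure_Union) (auto intro!: rectangle_events)
  finally show ?thesis .
qed

lemma risk_eq_integral:
  assumes f: "classifier SX f"
  shows "integrable marginal (\<lambda>x. if f x = 1 then 1 - eta x else eta x)"
    and "risk P f = (\<integral>x. (if f x = 1 then 1 - eta x else eta x) \<partial>marginal)"
proof -
  interpret marginal: prob_space marginal by (intro prob_space_distr) simp
  note [measurable] = classifier_measurable[OF f]
  define A B where "A = {x \<in> space SX. f x = 1}" and "B = {x \<in> space SX. f x = -1}"
  have [measurable]: "A \<in> sets SX" "B \<in> sets SX" unfolding A_def B_def by measurable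
  define g where "g x = indicator A x - indicator A x * eta x + indicator B x * eta x" for x
  have g_eq: "(if f x = 1 then 1 - eta x else eta x) = g x" if "x \<in> space SX" for x
    using that classifier_values[OF f, of x] by (auto simp: g_def A_def B_def)
  have "integrable marginal (indicator A :: _ \<Rightarrow> real)"
    by (intro integrable_real_indicator) (auto simp: marginal.emeasure_eq_measure)
  hence int_g: "integrable marginal g"
    unfolding g_def[abs_def] by (intro Bochner_Integration.integrable_add Bochner_Integration.integrable_diff integrable_indicator_eta) auto
  thus "integrable marginal (\<lambda>x. if f x = 1 then 1 - eta x else eta x)"
    using g_eq by (subst Bochner_Integration.integrable_cong[OF refl]) auto
  have "risk P f = measure marginal A - (\<integral>x. indicator A x * eta x \<partial>marginal) + (\<integral>x. indicator B x * eta x \<partial>marginal)"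
    by (simp add: risk_eq_prob[OF f] prob_label_minus_one prob_label_one flip: A_def B_def)
  also have "\<dots> = (\<integral>x. g x \<partial>marginal)"
    using \<open>integrable marginal (indicator A)\<close>
    by (simp add: g_def integrable_indicator_eta Bochner_Integration.integral_add Bochner_Integration.integral_diff)
  also have "\<dots> = (\<integral>x. (if f x = 1 then 1 - eta x else eta x) \<partial>marginal)"
    using g_eq by (intro Bochner_Integration.integral_cong) auto
  finally show "risk P f = (\<integral>x. (if f x = 1 then 1 - eta x else eta x) \<partial>marginal)" .
qed

lemma classifier_bayes_rule: "classifier SX (bayes_rule eta)"
proof -
  have "(\<lambda>x. sign1 (2 * eta x - 1)) \<in> borel_measurable SX" unfolding sign1_def by measurable
  thus ?thesis by (simp add: classifier_def bayes_rule_def[abs_def] sign1_def)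
qed

text \<open>Pointwise, the Bayes rule selects the smaller of the two conditional error probabilities
  \<open>1 - eta x\<close> and \<open>eta x\<close>.\<close>
lemma excess_risk_nonneg:
  assumes f: "classifier SX f"
  shows "0 \<le> excess_risk P eta f"
proof -
  have "excess_risk P eta f = (\<integral>x. (if f x = 1 then 1 - eta x else eta x)
      - (if bayes_rule eta x = 1 then 1 - eta x else eta x) \<partial>marginal)"
    using risk_eq_integral[OF f] risk_eq_integral[OF classifier_bayes_rule]
    by (simp add: excess_risk_def bayes_risk_def)
  also have "\<dots> \<ge> 0"
    using classifier_values[OF f]
    by (intro Bochner_Integration.integral_nonneg) (fastforce simp: bayes_rule_def sign1_def)
  finally show ?thesis .
qed

lemma disagreement_bayes_rule_le:
  assumes "margin_assumption P SX eta kappa c0" "classifier SX f"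
  shows "disagreement P f (bayes_rule eta) \<le> c0 / 2 * excess_risk P eta f powr (1 / kappa)"
  using assms disagreement_eq_integral[OF assms(2) classifier_bayes_rule]
  by (simp add: margin_assumption_def excess_risk_def)

lemma disagreement_le_margin:
  assumes "margin_assumption P SX eta kappa c0" "classifier SX f" "classifier SX g"
  shows "disagreement P f g
    \<le> c0 / 2 * (excess_risk P eta f powr (1 / kappa) + excess_risk P eta g powr (1 / kappa))"
  using disagreement_triangle[OF assms(2,3) classifier_bayes_rule]
    disagreement_bayes_rule_le[OF assms(1,2)] disagreement_bayes_rule_le[OF assms(1,3)]
  by (simp add: distrib_left)

end

section \<open>Empirical risk minimisation over a finite class\<close>

locale erm_aggregate = regression_model P SX eta for P :: "('a \<times> real) measure" and SX eta +
  fixes kappa c0 :: real and F :: "('a \<Rightarrow> real) set" and n :: nat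
    and erm :: "(nat \<Rightarrow> 'a \<times> real) \<Rightarrow> 'a \<Rightarrow> real"
  assumes margin: "margin_assumption P SX eta kappa c0"
    and kappa: "1 \<le> kappa" and c0: "0 < c0"
    and finite_F: "finite F" and classifier_F: "\<And>f. f \<in> F \<Longrightarrow> classifier SX f"
    and n_pos: "1 \<le> n"
    and ERM: "is_ERM n P F erm"
    and erm_events: "\<And>f. f \<in> F \<Longrightarrow>
      {D \<in> space (PiM {..<n} (\<lambda>_. P)). erm D = f} \<in> sets (PiM {..<n} (\<lambda>_. P))"
begin

abbreviation sample_law :: "(nat \<Rightarrow> 'a \<times> real) measure" where
  "sample_law \<equiv> PiM {..<n} (\<lambda>_. P)"

lemma log_card_div_nonneg: "F \<noteq> {} \<Longrightarrow> 0 \<le> ln (card F) / n"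
  using finite_F by (simp add: Suc_le_eq card_gt_0_iff)

lemma erm_in_F: "D \<in> space sample_law \<Longrightarrow> erm D \<in> F"
  using ERM by (simp add: is_ERM_def)

lemma erm_hinge_sum_le:
  assumes "D \<in> space sample_law" "g \<in> F"
  shows "(\<Sum>i<n. hinge_loss (erm D) (D i)) \<le> (\<Sum>i<n. hinge_loss g (D i))"
proof -
  have "emp_hinge n D (erm D) \<le> emp_hinge n D g"
    using ERM assms by (simp add: is_ERM_def)
  thus ?thesis using n_pos by (simp add: emp_hinge_def hinge_loss_def divide_le_cancel)
qed

lemma gap_times_prob_erm_le:
  assumes f: "f \<in> F" and fb: "fb \<in> F"
    and fb_min: "\<And>g. g \<in> F \<Longrightarrow> excess_risk P eta fb \<le> excess_risk P eta g"
    and gap: "deviation_threshold c0 (1 / kappa) (ln (card F) / n) (excess_risk P eta fb)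
      < excess_risk P eta f - excess_risk P eta fb"
  shows "(excess_risk P eta f - excess_risk P eta fb) * measure sample_law {D \<in> space sample_law. erm D = f}
    \<le> deviation_threshold c0 (1 / kappa) (ln (card F) / n) (excess_risk P eta fb) / card F"
proof -
  define t ell e eb where "t = 1 / kappa" and "ell = ln (card F) / n"
    and "e = excess_risk P eta f" and "eb = excess_risk P eta fb"
  define eps where "eps = deviation_threshold c0 t ell eb"
  have t: "0 < t" "t \<le> 1" using kappa by (auto simp: t_def)
  have f_cl: "classifier SX f" and fb_cl: "classifier SX fb" using f fb classifier_F by auto
  have eb: "0 \<le> eb" using excess_risk_nonneg[OF fb_cl] by (simp add: eb_def)
  have "0 \<le> deviation_threshold c0 t ell eb"
    using c0 fb unfolding ell_def by (intro deviation_threshold_nonneg log_card_div_nonneg) auto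
  hence "f \<noteq> fb" using gap by (auto simp: t_def ell_def eb_def)
  hence M: "2 \<le> card F"
    using f fb finite_F card_mono[of F "{f, fb}"] by auto
  hence ell: "0 < ell" using n_pos by (simp add: ell_def)
  have eps: "0 < eps"
    using ell c0 by (simp add: eps_def deviation_threshold_def add_pos_nonneg)
  have "measure sample_law {D \<in> space sample_law. erm D = f}
      \<le> exp (- (n * (risk P f - risk P fb)^2 / (2 * disagreement P f fb)))"
    using fb_min[OF f] erm_events[OF f] erm_hinge_sum_le[OF _ fb]
    by (intro prob_hinge_sum_le_tail[OF f_cl fb_cl]) (auto simp: excess_risk_def)
  hence tail: "measure sample_law {D \<in> space sample_law. erm D = f}
      \<le> exp (- (n * (e - eb)^2 / (2 * disagreement P f fb)))"
    by (simp add: e_def eb_def excess_risk_def)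
  have var: "2 * disagreement P f fb \<le> c0 * ((e - eb + eb) powr t + eb powr t)"
    using disagreement_le_margin[OF margin f_cl fb_cl] by (simp add: e_def eb_def t_def)
  have "2 * c0 * ell * ((eps + eb) powr t + eb powr t) \<le> eps^2"
    unfolding eps_def using ell c0 eb t by (rule deviation_threshold_sq_ge)
  hence eps_sq: "2 * ln (card F) * (c0 * ((eps + eb) powr t + eb powr t)) \<le> n * eps^2"
    using n_pos by (simp add: ell_def field_simps)
  have gap_d: "e - eb \<le> disagreement P f fb"
    using risk_diff_le_disagreement[OF f_cl fb_cl] by (simp add: e_def eb_def excess_risk_def)
  have "eps < e - eb" using gap by (simp add: eps_def t_def ell_def e_def eb_def)
  hence "(e - eb) * measure sample_law {D \<in> space sample_law. erm D = f} \<le> eps / card F"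
    by (rule gap_times_tail_le[OF eps _ gap_d var eps_sq tail eb _ t c0 M]) simp
  thus ?thesis by (simp add: eps_def t_def ell_def e_def eb_def)
qed

lemma integral_excess_risk_erm_le:
  assumes fb: "fb \<in> F"
    and fb_min: "\<And>g. g \<in> F \<Longrightarrow> excess_risk P eta fb \<le> excess_risk P eta g"
  shows "(\<integral>D. excess_risk P eta (erm D) \<partial>sample_law)
    \<le> excess_risk P eta fb + 2 * deviation_threshold c0 (1 / kappa) (ln (card F) / n) (excess_risk P eta fb)"
proof -
  interpret S: prob_space sample_law by (intro prob_space_PiM) (rule prob_space_axioms)
  define eps where "eps = deviation_threshold c0 (1 / kappa) (ln (card F) / n) (excess_risk P eta fb)"
  define p where "p f = S.prob {D \<in> space sample_law. erm D = f}" for f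
  have eps: "0 \<le> eps"
    using c0 fb log_card_div_nonneg by (auto simp: eps_def intro!: deviation_threshold_nonneg)
  have integral: "(\<integral>D. h (erm D) \<partial>sample_law) = (\<Sum>f\<in>F. h f * p f)" for h :: "_ \<Rightarrow> real"
    unfolding p_def using finite_F erm_in_F erm_events by (rule S.integral_finite_range)
  have total: "(\<Sum>f\<in>F. p f) = 1" using integral[of "\<lambda>_. 1"] S.prob_space by simp
  have each: "(excess_risk P eta f - excess_risk P eta fb) * p f \<le> eps * p f + eps / card F"
    if "f \<in> F" for f
  proof (cases "eps < excess_risk P eta f - excess_risk P eta fb")
    case True
    have "0 \<le> eps * p f" using eps by (simp add: p_def)
    thus ?thesis using gap_times_prob_erm_le[OF that fb fb_min] True by (simp add: eps_def p_def)
  next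
    case False
    thus ?thesis using eps by (simp add: p_def mult_right_mono add_increasing2)
  qed
  have "(\<integral>D. excess_risk P eta (erm D) \<partial>sample_law) - excess_risk P eta fb
      = (\<Sum>f\<in>F. (excess_risk P eta f - excess_risk P eta fb) * p f)"
    by (simp add: integral total left_diff_distrib sum_subtractf flip: sum_distrib_left)
  also have "\<dots> \<le> (\<Sum>f\<in>F. eps * p f + eps / card F)" by (intro sum_mono each)
  also have "\<dots> = 2 * eps"
    using fb finite_F by (simp add: sum.distrib total flip: sum_distrib_left) (metis card_0_eq empty_iff)
  finally show ?thesis by (simp add: eps_def)
qed

end

theorem theorem3:
  fixes P :: "('a \<times> real) measure" and SX :: "'a measure"
    and eta :: "'a \<Rightarrow> real" and kappa c0 :: real
    and F :: "('a \<Rightarrow> real) set" and M n :: nat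
    and erm :: "(nat \<Rightarrow> 'a \<times> real) \<Rightarrow> ('a \<Rightarrow> real)"
  assumes "prob_space P"
    and "sets P = sets (SX \<Otimes>\<^sub>M borel)"
    and "AE z in P. snd z \<in> {-1, 1}"
    and "is_regression_fun P SX eta"
    and "kappa \<ge> 1" and "c0 > 0"
    and "margin_assumption P SX eta kappa c0"
    and "finite F" and "F \<noteq> {}" and "card F = M"
    and "\<forall>f \<in> F. classifier SX f"
    and "n \<ge> 1"
    and "is_ERM n P F erm"
    and "\<forall>f \<in> F. {D \<in> space (PiM {..<n} (\<lambda>_. P)). erm D = f} \<in> sets (PiM {..<n} (\<lambda>_. P))"
  shows "(\<integral>D. risk P (erm D) - bayes_risk P eta \<partial>(PiM {..<n} (\<lambda>_. P)))
    \<le> Min ((\<lambda>f. risk P f - bayes_risk P eta) ` F)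
       + 32 * max 6 (max (537 * c0) (16 * (2 * c0 + 1 / 3)))
         * (sqrt (Min ((\<lambda>f. (risk P f - bayes_risk P eta) powr (1 / kappa)) ` F) * ln (real M) / real n)
            + (ln (real M) / real n) powr (kappa / (2 * kappa - 1)))"
proof -
  interpret erm_aggregate P SX eta kappa c0 F n erm
    using assms prob_space_PiM
    by (intro erm_aggregate.intro regression_model.intro binary_classification.intro
        binary_classification_axioms.intro regression_model_axioms.intro erm_aggregate_axioms.intro) auto
  let ?e = "excess_risk P eta"
  have "Min (?e ` F) \<in> ?e ` F" using assms(8,9) by simp
  then obtain fb where fb: "fb \<in> F" "Min (?e ` F) = ?e fb" by auto
  have fb_min: "?e fb \<le> ?e g" if "g \<in> F" for g
    using fb assms(8) that by (metis Min_le finite_imageI imageI)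
  have e_fb: "0 \<le> ?e fb" using excess_risk_nonneg classifier_F fb(1) by blast
  have Min_powr: "Min ((\<lambda>f. ?e f powr (1 / kappa)) ` F) = ?e fb powr (1 / kappa)"
    using fb fb_min assms(8) e_fb kappa by (intro Min_eqI) (auto intro!: powr_mono2)
  define K where "K = 32 * max 6 (max (537 * c0) (16 * (2 * c0 + 1 / 3)))"
  have "0 \<le> ln M / n" using log_card_div_nonneg assms(9,10) by simp
  hence "2 * deviation_threshold c0 (1 / kappa) (ln M / n) (?e fb)
      \<le> K * (sqrt (?e fb powr (1 / kappa) * (ln M / n)) + (ln M / n) powr (1 / (2 - 1 / kappa)))"
    using e_fb kappa c0 by (intro deviation_threshold_le_rate) (auto simp: K_def)
  moreover have "1 / (2 - 1 / kappa) = kappa / (2 * kappa - 1)" using kappa by (simp add: field_simps)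
  ultimately have "(\<integral>D. ?e (erm D) \<partial>sample_law)
      \<le> ?e fb + K * (sqrt (?e fb powr (1 / kappa) * ln M / n) + (ln M / n) powr (kappa / (2 * kappa - 1)))"
    using integral_excess_risk_erm_le[OF fb(1) fb_min] assms(10) by simp
  thus ?thesis unfolding excess_risk_def[symmetric] fb(2) Min_powr K_def by simp
qed

end
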